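(* Consider the distributed detection model in the context and suppose $\alpha>\frac{1}{P_{0,1}+P_{1,0}}$ (so that $\pi_{1,1}<\pi_{1,0}$), with $0<\pi_{1,0},\pi_{1,1}<1$. Let $k=\sum_{i=1}^N u_i$ be the number of received ones. Then the MAP (error-probability-minimizing) fusion rule decides $H_0$ if $k>T'$ and $H_1$ if $k<T'$, where $$T'=\frac{\ln\left[\frac{P_1}{P_0}\left(\frac{1-\pi_{1,1}}{1-\pi_{1,0}}\right)^{N}\right]}{\ln\frac{\pi_{1,0}}{\pi_{1,1}}+\ln\frac{1-\pi_{1,1}}{1-\pi_{1,0}}}.$$
   Context: Binary hypothesis test between $H_0$ and $H_1$ with priors $P_0,P_1\in(0,1)$, $P_0+P_1=1$. There are $N$ sensors, each using the same fixed local threshold, so that conditionally on the hypothesis their local decisions $v_i\in\{0,1\}$ are i.i.d. with $P(v_i=1\mid H_1)=P_d$, $P(v_i=1\mid H_0)=P_f$, where $0<P_f<P_d<1$. Each sensor independently is Byzantine with probability $\alpha\in[0,1]$. Honest nodes send $u_i=v_i$; a Byzantine node sends $u_i=1$ with probability $P_{1,0}$ when $v_i=0$ and sends $u_i=0$ with probability $P_{0,1}$ when $v_i=1$. Hence conditionally on $H_j$ the $u_i$ are i.i.d. with $P(u_i=1\mid H_0)=\pi_{1,0}=\alpha(P_{1,0}(1-P_f)+(1-P_{0,1})P_f)+(1-\alpha)P_f$ and $P(u_i=1\mid H_1)=\pi_{1,1}=\alpha(P_{1,0}(1-P_d)+(1-P_{0,1})P_d)+(1-\alpha)P_d$. The fusion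 center knows $(\alpha,P_{1,0},P_{0,1})$ and the MAP rule decides $H_1$ when $P(\mathbf u\mid H_1)/P(\mathbf u\mid H_0)>P_0/P_1$ and $H_0$ when it is $<P_0/P_1$. *)

theory Defs
  imports Complex_Main
begin

text \<open>Probability that a transmitted bit is 1 under H0 (pi_{1,0}) and under H1 (pi_{1,1}).\<close>
definition pi10 :: "real \<Rightarrow> real \<Rightarrow> real \<Rightarrow> real \<Rightarrow> real" where
  "pi10 \<alpha> P10 P01 Pf = \<alpha> * (P10 * (1 - Pf) + (1 - P01) * Pf) + (1 - \<alpha>) * Pf"

definition pi11 :: "real \<Rightarrow> real \<Rightarrow> real \<Rightarrow> real \<Rightarrow> real" where
  "pi11 \<alpha> P10 P01 Pd = \<alpha> * (P10 * (1 - Pd) + (1 - P01) * Pd) + (1 - \<alpha>) * Pd"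

definition likelihood :: "nat \<Rightarrow> (nat \<Rightarrow> nat) \<Rightarrow> real \<Rightarrow> real" where
  "likelihood N u p = (\<Prod>i<N. if u i = 1 then p else 1 - p)"

text \<open>MAP fusion rule: Some True = decide H1, Some False = decide H0, None = tie.\<close>
definition map_rule :: "real \<Rightarrow> real \<Rightarrow> real \<Rightarrow> real \<Rightarrow> bool option" where
  "map_rule P0 P1 LH0 LH1 =
     (if LH1 / LH0 > P0 / P1 then Some True
      else if LH1 / LH0 < P0 / P1 then Some False else None)"

end

theory Submission
  imports Defs
begin

text \<open>Since \<open>\<alpha> (P\<^sub>0\<^sub>,\<^sub>1 + P\<^sub>1\<^sub>,\<^sub>0) > 1\<close>, the Byzantine nodes flip
  the order of the two probabilities of a received one: \<open>\<pi>\<^sub>1\<^sub>,\<^sub>1 < \<pi>\<^sub>1\<^sub>,\<^sub>0\<close>.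
  The likelihood of the received vector depends only on the number \<open>k\<close> of ones, and its
  log-likelihood ratio \<open>N b - k (a + b)\<close>, with \<open>a = ln (\<pi>\<^sub>1\<^sub>,\<^sub>0 / \<pi>\<^sub>1\<^sub>,\<^sub>1)\<close>
  and \<open>b = ln ((1 - \<pi>\<^sub>1\<^sub>,\<^sub>1) / (1 - \<pi>\<^sub>1\<^sub>,\<^sub>0))\<close> both positive, is strictly
  decreasing in \<open>k\<close>. Comparing it with \<open>ln (P\<^sub>0 / P\<^sub>1)\<close> gives the threshold \<open>T'\<close>.\<close>

lemma pi11_minus_pi10:
  "pi11 \<alpha> P10 P01 Pd - pi10 \<alpha> P10 P01 Pf = (Pd - Pf) * (1 - \<alpha> * (P01 + P10))"
  unfolding pi10_def pi11_def by (simp add: algebra_simps)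

lemma pi11_less_pi10:
  assumes "Pf < Pd" and "P01 + P10 > 0" and "\<alpha> > 1 / (P01 + P10)"
  shows "pi11 \<alpha> P10 P01 Pd < pi10 \<alpha> P10 P01 Pf"
proof -
  have "1 - \<alpha> * (P01 + P10) < 0"
    using assms(2,3) by (simp add: field_simps)
  then have "(Pd - Pf) * (1 - \<alpha> * (P01 + P10)) < 0"
    using assms(1) by (simp add: mult_pos_neg)
  then show ?thesis
    using pi11_minus_pi10 by (metis diff_less_0_iff_less)
qed

lemma sum_binary_le:
  fixes u :: "nat \<Rightarrow> nat"
  assumes "\<forall>i<N. u i \<in> {0, 1}"
  shows "(\<Sum>i<N. u i) \<le> N"
proof -
  have "(\<Sum>i<N. u i) \<le> (\<Sum>i<N. 1)"
    using assms by (intro sum_mono) auto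
  then show ?thesis by simp
qed

lemma likelihood_eq_count:
  assumes "\<forall>i<N. u i \<in> {0, 1}"
  shows "likelihood N u p = p ^ (\<Sum>i<N. u i) * (1 - p) ^ (N - (\<Sum>i<N. u i))"
  using assms
proof (induction N)
  case 0
  then show ?case by (simp add: likelihood_def)
next
  case (Suc N)
  have IH: "likelihood N u p = p ^ (\<Sum>i<N. u i) * (1 - p) ^ (N - (\<Sum>i<N. u i))"
    using Suc by auto
  have le: "(\<Sum>i<N. u i) \<le> N"
    using Suc.prems by (intro sum_binary_le) auto
  have step: "likelihood (Suc N) u p = likelihood N u p * (if u N = 1 then p else 1 - p)"
    by (simp add: likelihood_def)
  consider "u N = 1" | "u N = 0"
    using Suc.prems by auto
  then show ?case
  proof cases
    case 1
    then show ?thesis using IH step by (simp add: algebra_simps)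
  next
    case 2
    moreover have "Suc N - (\<Sum>i<N. u i) = Suc (N - (\<Sum>i<N. u i))"
      using le by simp
    ultimately show ?thesis using IH step by (simp add: algebra_simps)
  qed
qed

lemma ln_likelihood_ratio:
  assumes "\<forall>i<N. u i \<in> {0, 1}"
    and "0 < p0" "p0 < 1" "0 < p1" "p1 < 1"
  defines "k \<equiv> \<Sum>i<N. u i"
  shows "ln (likelihood N u p1 / likelihood N u p0)
         = real N * ln ((1 - p1) / (1 - p0)) - real k * (ln (p0 / p1) + ln ((1 - p1) / (1 - p0)))"
proof -
  have "real (N - k) = real N - real k"
    using sum_binary_le[OF assms(1)] k_def by simp
  then show ?thesis
    unfolding likelihood_eq_count[OF assms(1)] k_def[symmetric] using assms(2-5)
    by (simp add: ln_mult ln_div ln_realpow algebra_simps)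
qed

lemma map_rule_by_ln:
  assumes "0 < P0" "0 < P1" "0 < LH0" "0 < LH1"
  shows "ln (LH1 / LH0) > ln (P0 / P1) \<Longrightarrow> map_rule P0 P1 LH0 LH1 = Some True"
    and "ln (LH1 / LH0) < ln (P0 / P1) \<Longrightarrow> map_rule P0 P1 LH0 LH1 = Some False"
  using assms by (auto simp: map_rule_def)

theorem map_rule_count_threshold:
  assumes "0 < P0" "0 < P1"
    and "0 < p1" "p1 < p0" "p0 < 1"
    and "\<forall>i<N. u i \<in> {0, 1}"
  defines "k \<equiv> \<Sum>i<N. u i"
    and "T' \<equiv> ln ((P1 / P0) * ((1 - p1) / (1 - p0)) ^ N)
              / (ln (p0 / p1) + ln ((1 - p1) / (1 - p0)))"
    and "d \<equiv> map_rule P0 P1 (likelihood N u p0) (likelihood N u p1)"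
  shows "(real k > T' \<longrightarrow> d = Some False) \<and> (real k < T' \<longrightarrow> d = Some True)"
proof -
  define a where "a = ln (p0 / p1)"
  define b where "b = ln ((1 - p1) / (1 - p0))"
  have "a > 0" "b > 0"
    unfolding a_def b_def using assms(3-5) by simp_all
  have LR: "ln (likelihood N u p1 / likelihood N u p0) = real N * b - real k * (a + b)"
    unfolding a_def b_def k_def using ln_likelihood_ratio assms(3-6) by simp
  have "ln ((P1 / P0) * ((1 - p1) / (1 - p0)) ^ N) = ln (P1 / P0) + real N * b"
    unfolding b_def using assms(1-5) by (simp add: ln_mult ln_realpow del: times_divide_eq_left)
  then have T': "T' = (ln (P1 / P0) + real N * b) / (a + b)"
    unfolding T'_def a_def b_def by simp
  have prior: "ln (P0 / P1) = - ln (P1 / P0)"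
    using assms(1,2) by (simp add: ln_div)
  have lik_pos: "0 < likelihood N u p0" "0 < likelihood N u p1"
    using assms(3-6) by (simp_all add: likelihood_eq_count)
  show ?thesis
  proof (intro conjI impI)
    assume "real k > T'"
    then have "real k * (a + b) > ln (P1 / P0) + real N * b"
      using T' \<open>a > 0\<close> \<open>b > 0\<close> by (simp add: field_simps)
    then show "d = Some False"
      unfolding d_def using map_rule_by_ln(2)[OF assms(1,2) lik_pos] LR prior by simp
  next
    assume "real k < T'"
    then have "real k * (a + b) < ln (P1 / P0) + real N * b"
      using T' \<open>a > 0\<close> \<open>b > 0\<close> by (simp add: field_simps)
    then show "d = Some True"
      unfolding d_def using map_rule_by_ln(1)[OF assms(1,2) lik_pos] LR prior by simp
  qed
qed

theorem lemma5:
  fixes N :: nat and u :: "nat \<Rightarrow> nat"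
    and P0 P1 Pd Pf \<alpha> P10 P01 :: real
  assumes "0 < P0" "P0 < 1" "0 < P1" "P1 < 1" "P0 + P1 = 1"
    and "0 < Pf" "Pf < Pd" "Pd < 1"
    and "0 \<le> \<alpha>" "\<alpha> \<le> 1"
    and "0 \<le> P10" "P10 \<le> 1" "0 \<le> P01" "P01 \<le> 1"
    and "P01 + P10 > 0" "\<alpha> > 1 / (P01 + P10)"
    and "0 < pi10 \<alpha> P10 P01 Pf" "pi10 \<alpha> P10 P01 Pf < 1"
    and "0 < pi11 \<alpha> P10 P01 Pd" "pi11 \<alpha> P10 P01 Pd < 1"
    and "\<forall>i<N. u i \<in> {0, 1}"
  shows "let p0 = pi10 \<alpha> P10 P01 Pf; p1 = pi11 \<alpha> P10 P01 Pd;
             k = (\<Sum>i<N. u i);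
             T' = ln ((P1 / P0) * ((1 - p1) / (1 - p0)) ^ N)
                  / (ln (p0 / p1) + ln ((1 - p1) / (1 - p0)));
             d = map_rule P0 P1 (likelihood N u p0) (likelihood N u p1)
         in (real k > T' \<longrightarrow> d = Some False) \<and> (real k < T' \<longrightarrow> d = Some True)"
  unfolding Let_def
  using map_rule_count_threshold[OF assms(1,3,19) pi11_less_pi10[OF assms(7,15,16)] assms(18,21)]
  by simp

end
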